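(* Let $\mathbb{A}$ be a medial algebra over a field of characteristic not $2,3$ and let $c$ be a nonzero idempotent with $L_c$ invertible. Define on the vector space $\mathbb{A}$ the new multiplication $x\circ y=L_c^{-1}(xy)$. Then $(\mathbb{A},\circ)$ is a unital commutative associative algebra.
   Context: All algebras are commutative, possibly nonassociative, finite-dimensional. Medial: $(xy)(zw)=(xz)(yw)$ identically. $L_c:x\mapsto cx$. *)

theory Defs
  imports Main "HOL.Vector_Spaces"
begin

definition bilinear_product :: "('k::field \<Rightarrow> 'v::ab_group_add \<Rightarrow> 'v) \<Rightarrow> ('v \<Rightarrow> 'v \<Rightarrow> 'v) \<Rightarrow> bool" where
  "bilinear_product scale m \<longleftrightarrow>
     (\<forall>x y z. m (x + y) z = m x z + m y z) \<and>
     (\<forall>x y z. m x (y + z) = m x y + m x z) \<and>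
     (\<forall>a x y. m (scale a x) y = scale a (m x y)) \<and>
     (\<forall>a x y. m x (scale a y) = scale a (m x y))"

definition medial :: "('v \<Rightarrow> 'v \<Rightarrow> 'v) \<Rightarrow> bool" where
  "medial m \<longleftrightarrow> (\<forall>x y z w. m (m x y) (m z w) = m (m x z) (m y w))"

definition finite_dim :: "('k::field \<Rightarrow> 'v::ab_group_add \<Rightarrow> 'v) \<Rightarrow> bool" where
  "finite_dim scale \<longleftrightarrow> (\<exists>B. finite B \<and> module.span scale B = UNIV)"

end

theory Submission
  imports Defs
begin

text \<open>By mediality and \<open>c c = c\<close>, \<open>L\<^sub>c\<close> is an endomorphism:
  \<open>c (x y) = (c c)(x y) = (c x)(c y)\<close>. Hence \<open>L\<^sub>c (L\<^sub>c\<^sup>-\<^sup>1(x y) z) = (x y)(c z) = (x c)(y z) = L\<^sub>c (x L\<^sub>c\<^sup>-\<^sup>1(y z))\<close>,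
  which is associativity of \<open>\<circ>\<close> after cancelling the injective \<open>L\<^sub>c\<close>; and \<open>c \<circ> x = L\<^sub>c\<^sup>-\<^sup>1(c x) = x\<close>.\<close>

lemma inv_add_hom:
  assumes "bij f" and "\<And>x y. f (x + y) = f x + f y"
  shows "inv f (a + b) = inv f a + inv f b"
  by (metis assms bij_inv_eq_iff)

lemma inv_scale_hom:
  assumes "bij f" and "\<And>k x. f (scale k x) = scale k (f x)"
  shows "inv f (scale k a) = scale k (inv f a)"
  by (metis assms bij_inv_eq_iff)

lemma bilinear_product_compose:
  assumes "bilinear_product scale m"
    and "\<And>x y. f (x + y) = f x + f y"
    and "\<And>k x. f (scale k x) = scale k (f x)"
  shows "bilinear_product scale (\<lambda>x y. f (m x y))"
  using assms unfolding bilinear_product_def by simp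

lemma bilinear_product_isotope:
  assumes "bilinear_product scale m" and "bij (m c)"
  shows "bilinear_product scale (\<lambda>x y. inv (m c) (m x y))"
proof (rule bilinear_product_compose[OF assms(1)])
  show "inv (m c) (x + y) = inv (m c) x + inv (m c) y" for x y
    using assms by (intro inv_add_hom) (auto simp: bilinear_product_def)
  show "inv (m c) (scale k x) = scale k (inv (m c) x)" for k x
    using assms by (intro inv_scale_hom) (auto simp: bilinear_product_def)
qed

lemma medial_left_mult_idempotent_hom:
  assumes "medial m" and "m c c = c"
  shows "m c (m x y) = m (m c x) (m c y)"
  by (metis assms medial_def)

lemma medial_isotope_assoc:
  assumes med: "medial m" and comm: "\<And>x y. m x y = m y x"
    and idem: "m c c = c" and bij: "bij (m c)"
  shows "m (inv (m c) (m x y)) z = m x (inv (m c) (m y z))"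
proof -
  have cancel: "m c (inv (m c) a) = a" for a
    using bij by (simp add: bij_is_surj surj_f_inv_f)
  have "m c (m (inv (m c) (m x y)) z) = m (m x y) (m c z)"
    by (simp add: medial_left_mult_idempotent_hom[OF med idem] cancel)
  also have "\<dots> = m (m x c) (m y z)"
    using med by (simp add: medial_def)
  also have "\<dots> = m c (m x (inv (m c) (m y z)))"
    by (simp add: medial_left_mult_idempotent_hom[OF med idem] cancel comm)
  finally show ?thesis
    using bij by (simp add: bij_is_inj inj_eq)
qed

lemma isotope_unit:
  assumes "bij (m c)"
  shows "inv (m c) (m c x) = x"
  using assms by (simp add: bij_is_inj)

theorem proposition3p9:
  fixes scale :: "'k::field \<Rightarrow> 'v::ab_group_add \<Rightarrow> 'v"
    and mult :: "'v \<Rightarrow> 'v \<Rightarrow> 'v"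
    and c :: 'v
  assumes vs: "vector_space scale"
    and fd: "finite_dim scale"
    and char2: "(2::'k) \<noteq> 0" and char3: "(3::'k) \<noteq> 0"
    and alg: "bilinear_product scale mult"
    and comm: "\<And>x y. mult x y = mult y x"
    and med: "medial mult"
    and idem: "mult c c = c" and nz: "c \<noteq> 0"
    and Lc_inv: "bij (mult c)"
  shows "let circ = (\<lambda>x y. inv (mult c) (mult x y)) in
           bilinear_product scale circ \<and>
           (\<forall>x y. circ x y = circ y x) \<and>
           (\<forall>x y z. circ (circ x y) z = circ x (circ y z)) \<and>
           (\<exists>e. \<forall>x. circ e x = x \<and> circ x e = x)"
  unfolding Let_def
proof (intro conjI allI)
  show "bilinear_product scale (\<lambda>x y. inv (mult c) (mult x y))"
    using alg Lc_inv by (rule bilinear_product_isotope)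
  show "inv (mult c) (mult x y) = inv (mult c) (mult y x)" for x y
    by (simp add: comm)
  show "inv (mult c) (mult (inv (mult c) (mult x y)) z)
      = inv (mult c) (mult x (inv (mult c) (mult y z)))" for x y z
    by (simp add: medial_isotope_assoc[OF med comm idem Lc_inv])
  show "\<exists>e. \<forall>x. inv (mult c) (mult e x) = x \<and> inv (mult c) (mult x e) = x"
    using isotope_unit[of mult c, OF Lc_inv] comm by metis
qed

end
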